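(* Let $\ell>0$ and let $\tilde X$ be distributed as $X\sim N(0,1)$ conditioned on $X>\ell$. Then $\Pr[|\tilde X|>t]\le2\exp(-t^2/K_1^2)$ for every $t>0$, where $K_1=\max\{\sqrt{20},|\ell|\sqrt{10}\}$. *)

theory Defs
  imports "HOL-Probability.Probability"
begin

end

theory Submission
  imports Defs
begin

text \<open>
  Shifting the Gaussian density by \<open>d = t - l\<close> multiplies it, on the half-line \<open>x > l\<close>,
  by \<open>exp (- x d - d\<^sup>2/2) \<le> exp (- (t\<^sup>2 - l\<^sup>2)/2)\<close>; hence for \<open>t \<ge> l\<close> the conditional tail
  \<open>P(X > t | X > l)\<close> is at most \<open>exp ((l\<^sup>2 - t\<^sup>2)/2)\<close>, and it is trivially at most \<open>1\<close>.
  Since \<open>K\<^sup>2 \<ge> 20\<close> and \<open>K\<^sup>2 \<ge> 10 l\<^sup>2\<close>, both exponents \<open>0\<close> and \<open>(l\<^sup>2 - t\<^sup>2)/2\<close> are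
  dominated by \<open>1/10 - t\<^sup>2/K\<^sup>2\<close> in the respective ranges of \<open>t\<close>, and \<open>exp (1/10) \<le> 2\<close>.
\<close>

lemma exp_one_tenth_le_two: "exp (1/10::real) \<le> 2"
proof (rule ccontr)
  assume "\<not> ?thesis"
  hence "(2::real) ^ 10 < exp (1/10) ^ 10"
    by (intro power_strict_mono) auto
  also have "exp (1/10::real) ^ 10 = exp 1"
    by (simp add: exp_of_nat_mult[symmetric])
  also have "\<dots> \<le> 3" by (rule exp_le)
  finally show False by simp
qed

lemma std_normal_density_add:
  "std_normal_density (x + d) = std_normal_density x * exp (- x * d - d\<^sup>2 / 2)"
proof -
  have "- (x + d)\<^sup>2 / 2 = - x\<^sup>2 / 2 + (- x * d - d\<^sup>2 / 2)"
    by (simp add: power2_eq_square field_simps)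
  then have "exp (- (x + d)\<^sup>2 / 2) = exp (- x\<^sup>2 / 2) * exp (- x * d - d\<^sup>2 / 2)"
    by (simp only: exp_add)
  then show ?thesis
    by (simp only: std_normal_density_def mult.assoc)
qed

lemma std_normal_density_shift_le:
  assumes "0 \<le> l" "l \<le> x" "0 \<le> d"
  shows "std_normal_density (x + d) \<le> exp (- ((l + d)\<^sup>2 - l\<^sup>2) / 2) * std_normal_density x"
proof -
  have "l * d \<le> x * d" using assms by (intro mult_right_mono)
  then have "- x * d - d\<^sup>2 / 2 \<le> - ((l + d)\<^sup>2 - l\<^sup>2) / 2"
    by (simp add: power2_eq_square algebra_simps)
  then show ?thesis
    by (simp add: std_normal_density_add mult.commute mult_left_mono normal_density_nonneg)
qed

lemma nn_integral_std_normal_tail_le: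
  fixes l t :: real
  assumes "0 \<le> l" "l \<le> t"
  shows "(\<integral>\<^sup>+x. ennreal (std_normal_density x) * indicator {t<..} x \<partial>lborel)
     \<le> exp (- (t\<^sup>2 - l\<^sup>2) / 2) * (\<integral>\<^sup>+x. ennreal (std_normal_density x) * indicator {l<..} x \<partial>lborel)"
proof -
  define d where "d = t - l"
  have "(\<integral>\<^sup>+x. ennreal (std_normal_density x) * indicator {t<..} x \<partial>lborel)
      = (\<integral>\<^sup>+x. ennreal (std_normal_density (d + x)) * indicator {t<..} (d + x) \<partial>lborel)"
    using nn_integral_real_affine[of "\<lambda>x. ennreal (std_normal_density x) * indicator {t<..} x" 1 d]
    by simp
  also have "\<dots> = (\<integral>\<^sup>+x. ennreal (std_normal_density (x + d)) * indicator {l<..} x \<partial>lborel)"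
    by (auto simp: d_def add.commute indicator_def intro!: nn_integral_cong)
  also have "\<dots> \<le> (\<integral>\<^sup>+x. exp (- (t\<^sup>2 - l\<^sup>2) / 2) * (ennreal (std_normal_density x) * indicator {l<..} x) \<partial>lborel)"
    using std_normal_density_shift_le[of l _ d] assms
    by (intro nn_integral_mono)
       (auto simp: d_def indicator_def ennreal_mult[symmetric] normal_density_nonneg intro!: ennreal_leI)
  also have "\<dots> = exp (- (t\<^sup>2 - l\<^sup>2) / 2) * (\<integral>\<^sup>+x. ennreal (std_normal_density x) * indicator {l<..} x \<partial>lborel)"
    by (rule nn_integral_cmult) auto
  finally show ?thesis .
qed

lemma (in prob_space) std_normal_distributed_tail_le:
  assumes X: "distributed M lborel X std_normal_density" and "0 \<le> l" "l \<le> t"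
  shows "\<P>(\<omega> in M. t < X \<omega>) \<le> exp (- (t\<^sup>2 - l\<^sup>2) / 2) * \<P>(\<omega> in M. l < X \<omega>)"
proof -
  have tail: "emeasure M {\<omega> \<in> space M. a < X \<omega>}
      = (\<integral>\<^sup>+x. ennreal (std_normal_density x) * indicator {a<..} x \<partial>lborel)" for a
    using distributed_emeasure[OF X, of "{a<..}"] by (simp add: vimage_def Int_def conj_commute)
  have "ennreal (\<P>(\<omega> in M. t < X \<omega>)) \<le> ennreal (exp (- (t\<^sup>2 - l\<^sup>2) / 2) * \<P>(\<omega> in M. l < X \<omega>))"
    using nn_integral_std_normal_tail_le[OF assms(2,3)]
    by (simp add: emeasure_eq_measure[symmetric] tail ennreal_mult)
  then show ?thesis by simp
qed

lemma (in prob_space) cond_prob_le_1: "\<P>(\<omega> in M. P \<omega> \<bar> Q \<omega>) \<le> 1"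
proof (cases "{\<omega> \<in> space M. Q \<omega>} \<in> events")
  case True
  then have "\<P>(\<omega> in M. P \<omega> \<and> Q \<omega>) \<le> \<P>(\<omega> in M. Q \<omega>)"
    by (intro finite_measure_mono) auto
  then show ?thesis
    using measure_nonneg[of M "{\<omega> \<in> space M. Q \<omega>}"] by (auto simp: cond_prob_def divide_le_eq_1 less_le)
next
  case False
  then show ?thesis
    by (simp add: cond_prob_def measure_notin_sets)
qed

lemma (in prob_space) std_normal_distributed_cond_tail_le:
  assumes X: "distributed M lborel X std_normal_density" and "0 \<le> l" "0 \<le> t"
  shows "\<P>(\<omega> in M. t < \<bar>X \<omega>\<bar> \<bar> l < X \<omega>) \<le> min 1 (exp (- (t\<^sup>2 - l\<^sup>2) / 2))"
proof (cases "l \<le> t")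
  case True
  have "\<P>(\<omega> in M. t < \<bar>X \<omega>\<bar> \<bar> l < X \<omega>) = \<P>(\<omega> in M. t < X \<omega>) / \<P>(\<omega> in M. l < X \<omega>)"
    using True \<open>0 \<le> l\<close> by (auto simp: cond_prob_def intro!: arg_cong[where f=prob] arg_cong2[where f="(/)"])
  also have "\<dots> \<le> exp (- (t\<^sup>2 - l\<^sup>2) / 2)"
    using std_normal_distributed_tail_le[OF X \<open>0 \<le> l\<close> True]
    by (cases "\<P>(\<omega> in M. l < X \<omega>) = 0") (auto simp: divide_simps mult.commute)
  finally show ?thesis
    using cond_prob_le_1 by simp
next
  case False
  with \<open>0 \<le> t\<close> have "t\<^sup>2 \<le> l\<^sup>2"
    by (intro power_mono) auto
  then have "1 \<le> exp (- (t\<^sup>2 - l\<^sup>2) / 2)" by simp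
  then show ?thesis
    using cond_prob_le_1 by simp
qed

lemma min_exp_le_subgaussian:
  fixes K l t :: real
  assumes "20 \<le> K\<^sup>2" "10 * l\<^sup>2 \<le> K\<^sup>2"
  shows "min 1 (exp (- (t\<^sup>2 - l\<^sup>2) / 2)) \<le> 2 * exp (- t\<^sup>2 / K\<^sup>2)"
proof -
  have "0 < K\<^sup>2" using assms by linarith
  have "min 0 (- (t\<^sup>2 - l\<^sup>2) / 2) \<le> 1/10 - t\<^sup>2 / K\<^sup>2"
  proof (cases "t\<^sup>2 \<le> l\<^sup>2")
    case True
    then have "10 * t\<^sup>2 \<le> K\<^sup>2" using assms by simp
    then have "t\<^sup>2 / K\<^sup>2 \<le> 1/10" using \<open>0 < K\<^sup>2\<close> by (simp add: field_simps)
    then show ?thesis by linarith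
  next
    case False
    have "l\<^sup>2 / K\<^sup>2 \<le> 1/10" using assms \<open>0 < K\<^sup>2\<close> by (simp add: field_simps)
    moreover have "(t\<^sup>2 - l\<^sup>2) / K\<^sup>2 \<le> (t\<^sup>2 - l\<^sup>2) / 2"
      using assms False by (intro divide_left_mono) auto
    ultimately show ?thesis by (simp add: diff_divide_distrib)
  qed
  then have "exp (min 0 (- (t\<^sup>2 - l\<^sup>2) / 2)) \<le> exp (1/10) * exp (- t\<^sup>2 / K\<^sup>2)"
    by (simp add: exp_add[symmetric])
  also have "\<dots> \<le> 2 * exp (- t\<^sup>2 / K\<^sup>2)"
    using exp_one_tenth_le_two by simp
  finally show ?thesis
    by (simp add: min_def split: if_splits)
qed

theorem lemma17:
  fixes M :: "'a measure" and X :: "'a \<Rightarrow> real" and l t :: real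
  assumes "prob_space M"
    and "distributed M lborel X std_normal_density"
    and "l > 0"
    and "t > 0"
  shows "cond_prob M (\<lambda>\<omega>. \<bar>X \<omega>\<bar> > t) (\<lambda>\<omega>. X \<omega> > l)
           \<le> 2 * exp (- t\<^sup>2 / (max (sqrt 20) (\<bar>l\<bar> * sqrt 10))\<^sup>2)"
proof -
  interpret prob_space M by fact
  define K where "K = max (sqrt 20) (\<bar>l\<bar> * sqrt 10)"
  have "(sqrt 20)\<^sup>2 \<le> K\<^sup>2" "(\<bar>l\<bar> * sqrt 10)\<^sup>2 \<le> K\<^sup>2"
    unfolding K_def by (intro power_mono; simp)+
  then have "20 \<le> K\<^sup>2" "10 * l\<^sup>2 \<le> K\<^sup>2"
    by (simp_all add: power_mult_distrib)
  then show ?thesis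
    using std_normal_distributed_cond_tail_le[OF assms(2)] min_exp_le_subgaussian \<open>l > 0\<close> \<open>t > 0\<close>
    unfolding K_def[symmetric] by (meson less_imp_le order_trans)
qed

end
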